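(* Let $\mathcal G=(\mathcal V,\mathcal E)$ be a finite undirected graph with finite label sets $\mathcal X_v$ and costs $\theta$ (unary $\theta_u$, pairwise $\theta_{uv}$). Let $\mathcal A,\mathcal B$ be a partition of $\mathcal G$, and let $\mathcal A'$ be an induced subgraph of $\mathcal G$ such that $\mathcal B$ is boundary complement to $\mathcal A'$ with respect to $\mathcal G$, and suppose $\mathcal V_{\mathcal A}\subseteq\mathcal V_{\mathcal A'}\subseteq\mathrm{SAC}(\theta)$. Let $x'\in\arg\min_{x\in\mathcal X_{\mathcal V_{\mathcal A'}}}E_{\mathcal A'}(\theta,x)$ and $x''\in\arg\min_{x\in\mathcal X_{\mathcal V_{\mathcal B}}}E_{\mathcal B}(\theta,x)$. If $x'_v=x''_v$ for all $v\in\mathcal V_{\partial\mathcal A'}$, then, writing $x'_{\mathcal A}$ for the restriction of $x'$ to $\mathcal V_{\mathcal A}$: $x'_{\mathcal A}\in\arg\min_{x\in\mathcal X_{\mathcal V_{\mathcal A}}}E_{\mathcal A}(\theta,x)$, and for every edge $uv\in\mathcal E$ with $u\in\mathcal V_{\mathcal A}$, $v\in\mathcal V_{\mathcal B}$ it holds that $(x'_u,x''_v)\in\arg\min_{(s,t)\in\mathcal X_u\times\mathcal X_v}\theta_{uv}(s,t)$.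
   Context: For $\mathcal V'\subseteq\mathcal V$, $\mathcal X_{\mathcal V'}=\prod_{v\in\mathcal V'}\mathcal X_v$. A subgraph induced by $\mathcal V'$ contains all edges of $\mathcal G$ between nodes of $\mathcal V'$; a partition $\mathcal A,\mathcal B$ of $\mathcal G$ consists of the subgraphs induced by two disjoint node sets covering $\mathcal V$. For a subgraph $\mathcal H$, $E_{\mathcal H}(\theta,x)=\sum_{u\in\mathcal V_{\mathcal H}}\theta_u(x_u)+\sum_{uv\in\mathcal E_{\mathcal H}}\theta_{uv}(x_u,x_v)$. For an induced subgraph $\mathcal A'$, $\mathcal V_{\partial\mathcal A'}=\{v\in\mathcal V_{\mathcal A'}\mid\exists uv\in\mathcal E: u\in\mathcal V\setminus\mathcal V_{\mathcal A'}\}$, and a subgraph is boundary complement to $\mathcal A'$ w.r.t. $\mathcal G$ if it is the subgraph induced by $(\mathcal V\setminus\mathcal V_{\mathcal A'})\cup\mathcal V_{\partial\mathcal A'}$. A node $u$ is strictly arc-consistent w.r.t. $\theta$ if there exist a label $x_u\in\mathcal X_u$ and labels $x_v\in\mathcal X_v$ for all neighbours $v$ of $u$ such that $\theta_u(x_u)<\theta_u(s)$ for all $s\ne x_u$ and $\theta_{uv}(x_u,x_v)<\theta_{uv}(s,t)$ for all $(s,t)\ne(x_u,x_v)$; $\mathrm{SAC}(\theta)$ denotes the set of strictly arc-consistent nodes. *)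

theory Defs
  imports Complex_Main
begin

text \<open>The undirected edge set is represented by a set
  E of ordered pairs, each undirected edge uv being stored exactly once (in one orientation);
  the pairwise cost of the stored orientation is thp u v s t, and the cost seen from the other
  endpoint is obtained by transposition (theta_uv(s,t) = theta_vu(t,s)).\<close>

definition graph_wf :: "'v set \<Rightarrow> ('v \<times> 'v) set \<Rightarrow> bool" where
  "graph_wf V E \<longleftrightarrow> finite V \<and> E \<subseteq> V \<times> V \<and> (\<forall>u. (u,u) \<notin> E)
     \<and> (\<forall>u v. (u,v) \<in> E \<longrightarrow> (v,u) \<notin> E)"

definition adj :: "('v \<times> 'v) set \<Rightarrow> 'v \<Rightarrow> 'v \<Rightarrow> bool" where
  "adj E u v \<longleftrightarrow> (u,v) \<in> E \<or> (v,u) \<in> E"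

definition theta_e :: "('v \<times> 'v) set \<Rightarrow> ('v \<Rightarrow> 'v \<Rightarrow> 'l \<Rightarrow> 'l \<Rightarrow> real) \<Rightarrow> 'v \<Rightarrow> 'v \<Rightarrow> 'l \<Rightarrow> 'l \<Rightarrow> real" where
  "theta_e E thp u v s t = (if (u,v) \<in> E then thp u v s t else thp v u t s)"

definition induced_edges :: "('v \<times> 'v) set \<Rightarrow> 'v set \<Rightarrow> ('v \<times> 'v) set" where
  "induced_edges E S = E \<inter> (S \<times> S)"

definition energy :: "('v \<times> 'v) set \<Rightarrow> ('v \<Rightarrow> 'l \<Rightarrow> real) \<Rightarrow> ('v \<Rightarrow> 'v \<Rightarrow> 'l \<Rightarrow> 'l \<Rightarrow> real)
     \<Rightarrow> 'v set \<Rightarrow> ('v \<Rightarrow> 'l) \<Rightarrow> real" where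
  "energy E thu thp S x = (\<Sum>u\<in>S. thu u (x u)) + (\<Sum>(u,v)\<in>induced_edges E S. thp u v (x u) (x v))"

text \<open>Labelings of node set S, i.e. elements of X_S (values outside S are irrelevant).\<close>
definition labeling :: "('v \<Rightarrow> 'l set) \<Rightarrow> 'v set \<Rightarrow> ('v \<Rightarrow> 'l) \<Rightarrow> bool" where
  "labeling X S x \<longleftrightarrow> (\<forall>v\<in>S. x v \<in> X v)"

definition is_argmin_energy :: "('v \<times> 'v) set \<Rightarrow> ('v \<Rightarrow> 'l set) \<Rightarrow> ('v \<Rightarrow> 'l \<Rightarrow> real)
     \<Rightarrow> ('v \<Rightarrow> 'v \<Rightarrow> 'l \<Rightarrow> 'l \<Rightarrow> real) \<Rightarrow> 'v set \<Rightarrow> ('v \<Rightarrow> 'l) \<Rightarrow> bool" where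
  "is_argmin_energy E X thu thp S x \<longleftrightarrow> labeling X S x \<and>
     (\<forall>y. labeling X S y \<longrightarrow> energy E thu thp S x \<le> energy E thu thp S y)"

definition boundary :: "'v set \<Rightarrow> ('v \<times> 'v) set \<Rightarrow> 'v set \<Rightarrow> 'v set" where
  "boundary V E A' = {v \<in> A'. \<exists>u \<in> V - A'. adj E u v}"

definition boundary_complement :: "'v set \<Rightarrow> ('v \<times> 'v) set \<Rightarrow> 'v set \<Rightarrow> 'v set" where
  "boundary_complement V E A' = (V - A') \<union> boundary V E A'"

definition SAC :: "'v set \<Rightarrow> ('v \<times> 'v) set \<Rightarrow> ('v \<Rightarrow> 'l set) \<Rightarrow> ('v \<Rightarrow> 'l \<Rightarrow> real)
     \<Rightarrow> ('v \<Rightarrow> 'v \<Rightarrow> 'l \<Rightarrow> 'l \<Rightarrow> real) \<Rightarrow> 'v set" where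
  "SAC V E X thu thp = {u \<in> V. \<exists>xu \<in> X u. \<exists>xn.
      (\<forall>v. adj E u v \<longrightarrow> xn v \<in> X v) \<and>
      (\<forall>s \<in> X u. s \<noteq> xu \<longrightarrow> thu u xu < thu u s) \<and>
      (\<forall>v. adj E u v \<longrightarrow> (\<forall>s \<in> X u. \<forall>t \<in> X v. (s,t) \<noteq> (xu, xn v) \<longrightarrow>
          theta_e E thp u v xu (xn v) < theta_e E thp u v s t))}"

end

theory Submission
  imports Defs
begin

text \<open>At a strictly arc-consistent node u every cost term touching u has a unique minimiser;
  call the unary one c u. For an edge uv between two such nodes, uniqueness forces the
  pairwise minimiser to be (c u, c v). Hence on V_A' the labeling c minimises every term of
  E_A' simultaneously, with strict unary optimality, so the minimiser x' of E_A' coincides with c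
  and minimises every term of E_A as well. An edge uv from A into B ends in the boundary of A'
  (nodes of A are not boundary nodes, as these belong to B), where x'' agrees with x' = c, so
  (x' u, x'' v) = (c u, c v) minimises theta_uv.\<close>

lemma adj_commute: "adj E u v \<longleftrightarrow> adj E v u"
  unfolding adj_def by auto

lemma theta_e_swap:
  assumes "graph_wf V E" "adj E u v"
  shows "theta_e E thp u v s t = theta_e E thp v u t s"
  using assms unfolding graph_wf_def adj_def theta_e_def by auto

lemma boundary_complement_adj_boundary:
  assumes "A \<inter> boundary_complement V E A' = {}" "A \<subseteq> A'"
    and "u \<in> A" "v \<in> boundary_complement V E A'" "adj E u v"
  shows "v \<in> boundary V E A'"
  using assms unfolding boundary_complement_def boundary_def adj_def by blast

definition termwise_minimal :: "('v \<times> 'v) set \<Rightarrow> ('v \<Rightarrow> 'l set) \<Rightarrow> ('v \<Rightarrow> 'l \<Rightarrow> real)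
     \<Rightarrow> ('v \<Rightarrow> 'v \<Rightarrow> 'l \<Rightarrow> 'l \<Rightarrow> real) \<Rightarrow> 'v set \<Rightarrow> ('v \<Rightarrow> 'l) \<Rightarrow> bool" where
  "termwise_minimal E X thu thp S x \<longleftrightarrow> labeling X S x
     \<and> (\<forall>u\<in>S. \<forall>s\<in>X u. thu u (x u) \<le> thu u s)
     \<and> (\<forall>u\<in>S. \<forall>v\<in>S. adj E u v \<longrightarrow>
          (\<forall>s\<in>X u. \<forall>t\<in>X v. theta_e E thp u v (x u) (x v) \<le> theta_e E thp u v s t))"

lemma termwise_minimal_subset:
  "termwise_minimal E X thu thp S x \<Longrightarrow> S' \<subseteq> S \<Longrightarrow> termwise_minimal E X thu thp S' x"
  unfolding termwise_minimal_def labeling_def by blast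

lemma termwise_minimal_cong:
  assumes "\<forall>u\<in>S. x u = y u"
  shows "termwise_minimal E X thu thp S x \<longleftrightarrow> termwise_minimal E X thu thp S y"
  using assms unfolding termwise_minimal_def labeling_def by auto

lemma termwise_minimal_pairwise_le:
  assumes "termwise_minimal E X thu thp S x" "labeling X S y"
  shows "(\<Sum>(u,v)\<in>induced_edges E S. thp u v (x u) (x v))
       \<le> (\<Sum>(u,v)\<in>induced_edges E S. thp u v (y u) (y v))"
proof (rule sum_mono, clarify)
  fix u v assume uv: "(u,v) \<in> induced_edges E S"
  then have "u \<in> S" "v \<in> S" "adj E u v" "theta_e E thp u v = thp u v"
    unfolding induced_edges_def adj_def theta_e_def by auto
  with assms show "thp u v (x u) (x v) \<le> thp u v (y u) (y v)"
    unfolding termwise_minimal_def labeling_def by metis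
qed

lemma termwise_minimal_is_argmin_energy:
  assumes "termwise_minimal E X thu thp S x"
  shows "is_argmin_energy E X thu thp S x"
  unfolding is_argmin_energy_def
proof (intro conjI allI impI)
  show "labeling X S x"
    using assms unfolding termwise_minimal_def by blast
  fix y assume y: "labeling X S y"
  have "(\<Sum>u\<in>S. thu u (x u)) \<le> (\<Sum>u\<in>S. thu u (y u))"
    using assms y unfolding termwise_minimal_def labeling_def by (intro sum_mono) blast
  with termwise_minimal_pairwise_le[OF assms y]
  show "energy E thu thp S x \<le> energy E thu thp S y"
    unfolding energy_def by linarith
qed

lemma is_argmin_energy_eq_termwise_minimal:
  assumes "finite S"
    and c: "termwise_minimal E X thu thp S c"
    and strict: "\<forall>u\<in>S. \<forall>s\<in>X u. s \<noteq> c u \<longrightarrow> thu u (c u) < thu u s"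
    and x: "is_argmin_energy E X thu thp S x"
  shows "\<forall>u\<in>S. x u = c u"
proof (rule ccontr)
  assume "\<not> (\<forall>u\<in>S. x u = c u)"
  then obtain u where u: "u \<in> S" "x u \<noteq> c u" by blast
  have x_lab: "labeling X S x" and c_lab: "labeling X S c"
    using x c unfolding is_argmin_energy_def termwise_minimal_def by blast+
  have "(\<Sum>w\<in>S. thu w (c w)) < (\<Sum>w\<in>S. thu w (x w))"
  proof (rule sum_strict_mono_ex1[OF \<open>finite S\<close>])
    show "\<forall>w\<in>S. thu w (c w) \<le> thu w (x w)"
      using c x_lab unfolding termwise_minimal_def labeling_def by blast
    show "\<exists>w\<in>S. thu w (c w) < thu w (x w)"
      using u strict x_lab unfolding labeling_def by metis
  qed
  with termwise_minimal_pairwise_le[OF c x_lab]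
  have "energy E thu thp S c < energy E thu thp S x"
    unfolding energy_def by linarith
  with x c_lab show False
    unfolding is_argmin_energy_def by force
qed

definition sac_witness :: "('v \<times> 'v) set \<Rightarrow> ('v \<Rightarrow> 'l set) \<Rightarrow> ('v \<Rightarrow> 'l \<Rightarrow> real)
     \<Rightarrow> ('v \<Rightarrow> 'v \<Rightarrow> 'l \<Rightarrow> 'l \<Rightarrow> real) \<Rightarrow> 'v \<Rightarrow> 'l \<Rightarrow> ('v \<Rightarrow> 'l) \<Rightarrow> bool" where
  "sac_witness E X thu thp u xu xn \<longleftrightarrow> xu \<in> X u \<and>
      (\<forall>v. adj E u v \<longrightarrow> xn v \<in> X v) \<and>
      (\<forall>s \<in> X u. s \<noteq> xu \<longrightarrow> thu u xu < thu u s) \<and>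
      (\<forall>v. adj E u v \<longrightarrow> (\<forall>s \<in> X u. \<forall>t \<in> X v. (s,t) \<noteq> (xu, xn v) \<longrightarrow>
          theta_e E thp u v xu (xn v) < theta_e E thp u v s t))"

lemma mem_SAC_iff:
  "u \<in> SAC V E X thu thp \<longleftrightarrow> u \<in> V \<and> (\<exists>xu xn. sac_witness E X thu thp u xu xn)"
  unfolding SAC_def sac_witness_def by blast

lemma sac_witness_neighbour_label:
  assumes G: "graph_wf V E" and uv: "adj E u v"
    and u: "sac_witness E X thu thp u cu nu"
    and v: "sac_witness E X thu thp v cv nv"
  shows "nu v = cv"
proof (rule ccontr)
  assume ne: "nu v \<noteq> cv"
  have vu: "adj E v u"
    using uv adj_commute by metis
  have labels: "cu \<in> X u" "cv \<in> X v" "nu v \<in> X v" "nv u \<in> X u"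
    using u v uv vu unfolding sac_witness_def by blast+
  have "theta_e E thp u v cu (nu v) < theta_e E thp u v (nv u) cv"
    using u uv labels ne unfolding sac_witness_def by auto
  moreover have "theta_e E thp v u cv (nv u) < theta_e E thp v u (nu v) cu"
    using v vu labels ne unfolding sac_witness_def by auto
  ultimately show False
    using theta_e_swap[OF G uv] by (metis less_asym)
qed

lemma SAC_termwise_minimal:
  assumes G: "graph_wf V E" and S: "S \<subseteq> SAC V E X thu thp"
  obtains c where "termwise_minimal E X thu thp S c"
    and "\<forall>u\<in>S. \<forall>s\<in>X u. s \<noteq> c u \<longrightarrow> thu u (c u) < thu u s"
proof -
  have "\<forall>u\<in>S. \<exists>xu xn. sac_witness E X thu thp u xu xn"
    using S by (auto simp: mem_SAC_iff)
  then obtain c n where w: "\<And>u. u \<in> S \<Longrightarrow> sac_witness E X thu thp u (c u) (n u)"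
    by metis
  have unary_min: "thu u (c u) \<le> thu u s" if "u \<in> S" "s \<in> X u" for u s
    using w[OF that(1)] that(2) unfolding sac_witness_def
    by (cases "s = c u") (auto simp: less_imp_le)
  have edge_min: "theta_e E thp u v (c u) (c v) \<le> theta_e E thp u v s t"
    if "u \<in> S" "v \<in> S" "adj E u v" "s \<in> X u" "t \<in> X v" for u v s t
  proof -
    have "n u v = c v"
      using sac_witness_neighbour_label[OF G that(3) w[OF that(1)] w[OF that(2)]] .
    then show ?thesis
      using w[OF that(1)] that(3-5) unfolding sac_witness_def
      by (cases "(s, t) = (c u, c v)") (auto simp: less_imp_le)
  qed
  have "termwise_minimal E X thu thp S c"
    using w unary_min edge_min unfolding termwise_minimal_def sac_witness_def labeling_def
    by blast
  moreover have "\<forall>u\<in>S. \<forall>s\<in>X u. s \<noteq> c u \<longrightarrow> thu u (c u) < thu u s"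
    using w unfolding sac_witness_def by blast
  ultimately show thesis
    using that by blast
qed

theorem proposition3:
  fixes V :: "'v set" and E :: "('v \<times> 'v) set" and X :: "'v \<Rightarrow> 'l set"
    and thu :: "'v \<Rightarrow> 'l \<Rightarrow> real" and thp :: "'v \<Rightarrow> 'v \<Rightarrow> 'l \<Rightarrow> 'l \<Rightarrow> real"
    and A B A' :: "'v set" and x' x'' :: "'v \<Rightarrow> 'l"
  assumes G: "graph_wf V E"
    and finX: "\<forall>v\<in>V. finite (X v)"
    and part: "A \<inter> B = {}" "A \<union> B = V"
    and A'V: "A' \<subseteq> V"
    and bc: "B = boundary_complement V E A'"
    and AA': "A \<subseteq> A'"
    and A'SAC: "A' \<subseteq> SAC V E X thu thp"
    and x': "is_argmin_energy E X thu thp A' x'"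
    and x'': "is_argmin_energy E X thu thp B x''"
    and agree: "\<forall>v \<in> boundary V E A'. x' v = x'' v"
  shows "is_argmin_energy E X thu thp A x'
    \<and> (\<forall>u \<in> A. \<forall>v \<in> B. adj E u v \<longrightarrow>
         x' u \<in> X u \<and> x'' v \<in> X v \<and>
         (\<forall>s \<in> X u. \<forall>t \<in> X v. theta_e E thp u v (x' u) (x'' v) \<le> theta_e E thp u v s t))"
proof -
  have "finite A'"
    using G A'V unfolding graph_wf_def by (meson finite_subset)
  obtain c where c: "termwise_minimal E X thu thp A' c"
    and strict: "\<forall>u\<in>A'. \<forall>s\<in>X u. s \<noteq> c u \<longrightarrow> thu u (c u) < thu u s"
    using SAC_termwise_minimal[OF G A'SAC] by blast
  have x'_eq_c: "\<forall>u\<in>A'. x' u = c u"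
    using is_argmin_energy_eq_termwise_minimal[OF \<open>finite A'\<close> c strict x'] .
  have x'_min: "termwise_minimal E X thu thp A' x'"
    using termwise_minimal_cong[OF x'_eq_c] c by (rule iffD2)
  have "is_argmin_energy E X thu thp A x'"
    using termwise_minimal_subset[OF x'_min AA'] by (rule termwise_minimal_is_argmin_energy)
  moreover have "x' u \<in> X u \<and> x'' v \<in> X v \<and>
      (\<forall>s \<in> X u. \<forall>t \<in> X v. theta_e E thp u v (x' u) (x'' v) \<le> theta_e E thp u v s t)"
    if u: "u \<in> A" and v: "v \<in> B" and uv: "adj E u v" for u v
  proof -
    have "v \<in> boundary V E A'"
      using boundary_complement_adj_boundary[OF part(1)[unfolded bc] AA' u v[unfolded bc] uv] .
    then have "v \<in> A'" "x'' v = x' v"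
      using agree unfolding boundary_def by auto
    moreover have "u \<in> A'"
      using u AA' by blast
    ultimately show ?thesis
      using x'_min uv unfolding termwise_minimal_def labeling_def by simp
  qed
  ultimately show ?thesis
    by blast
qed

end
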